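(* For every $n\ge1$ and every optimal $n$-town $S$, $$w(S)>\frac{h(S)}{2}-3\qquad\text{and}\qquad h(S)>\frac{w(S)}{2}-3.$$
   Context: An $n$-town is a set $S\subset\mathbb{Z}\times\mathbb{Z}$ of exactly $n$ distinct grid points; its cost is $c(S)=\frac12\sum_{s\in S}\sum_{t\in S}\|s-t\|_1$ (Manhattan distance), and it is optimal if its cost is minimum among all $n$-towns. For $i\in\mathbb{Z}$, the $i$-th column of $S$ is $C_i=\{(i,y)\in S\}$ and the $i$-th row is $R_i=\{(x,i)\in S\}$. The width of $S$ is $w(S)=\max_{i\in\mathbb{Z}}|R_i|$ and the height is $h(S)=\max_{i\in\mathbb{Z}}|C_i|$. *)

theory Defs
  imports Main "HOL-Library.Extended_Real"
begin

type_synonym point = "int \<times> int"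

definition manhattan :: "point \<Rightarrow> point \<Rightarrow> int" where
  "manhattan s t = \<bar>fst s - fst t\<bar> + \<bar>snd s - snd t\<bar>"

definition is_town :: "nat \<Rightarrow> point set \<Rightarrow> bool" where
  "is_town n S \<longleftrightarrow> finite S \<and> card S = n"

definition cost :: "point set \<Rightarrow> real" where
  "cost S = (1/2) * (\<Sum>s\<in>S. \<Sum>t\<in>S. real_of_int (manhattan s t))"

definition optimal_town :: "nat \<Rightarrow> point set \<Rightarrow> bool" where
  "optimal_town n S \<longleftrightarrow> is_town n S \<and> (\<forall>T. is_town n T \<longrightarrow> cost S \<le> cost T)"

definition col :: "point set \<Rightarrow> int \<Rightarrow> point set" where
  "col S i = {p \<in> S. fst p = i}"

definition row :: "point set \<Rightarrow> int \<Rightarrow> point set" where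
  "row S i = {p \<in> S. snd p = i}"

definition width :: "point set \<Rightarrow> nat" where
  "width S = Max (range (\<lambda>i. card (row S i)))"

definition height :: "point set \<Rightarrow> nat" where
  "height S = Max (range (\<lambda>i. card (col S i)))"

end

theory Submission
  imports Defs
begin

text \<open>
Let \<open>\<kappa>\<close> be a median row of an optimal town \<open>S\<close> of width \<open>w\<close>. Since moving a single point
never lowers the cost, every point above \<open>\<kappa>\<close> has its lower neighbour in \<open>S\<close>, so the row
sizes above \<open>\<kappa>\<close> are nonincreasing and, by Chebyshev's sum inequality, the total height
above \<open>\<kappa>\<close> is at most \<open>(T + 1) n / 4\<close> when the top point is \<open>T\<close> rows above \<open>\<kappa>\<close>. If
\<open>T \<ge> w + 2\<close>, moving the top point to a free spot of row \<open>\<kappa>\<close> at horizontal distance at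
most \<open>(w + 1) / 2\<close> would then lower the cost. Reflecting, every point lies within \<open>w + 1\<close>
rows of \<open>\<kappa>\<close>, so \<open>h \<le> 2 w + 3\<close>; exchanging the coordinates gives \<open>w \<le> 2 h + 3\<close>.
\<close>

definition dist_sum :: "point set \<Rightarrow> point \<Rightarrow> int" where
  "dist_sum S z = (\<Sum>t\<in>S. manhattan z t)"

definition half_below :: "point set \<Rightarrow> int \<Rightarrow> bool" where
  "half_below S \<kappa> \<longleftrightarrow> card S \<le> 2 * card {t\<in>S. snd t \<le> \<kappa>}"

lemma manhattan_commute: "manhattan s t = manhattan t s"
  unfolding manhattan_def by simp

lemma manhattan_self [simp]: "manhattan s s = 0"
  unfolding manhattan_def by simp

lemma optimal_town_finite: "optimal_town n S \<Longrightarrow> finite S"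
  and optimal_town_card: "optimal_town n S \<Longrightarrow> card S = n"
  unfolding optimal_town_def is_town_def by auto

lemma cost_insert:
  assumes "finite A" "a \<notin> A"
  shows "cost (insert a A) = cost A + dist_sum A a"
proof -
  let ?m = "\<lambda>s t. real_of_int (manhattan s t)"
  have "(\<Sum>s\<in>insert a A. \<Sum>t\<in>insert a A. ?m s t)
      = (\<Sum>t\<in>A. ?m a t) + (\<Sum>s\<in>A. ?m s a) + (\<Sum>s\<in>A. \<Sum>t\<in>A. ?m s t)"
    using assms by (simp add: sum.distrib)
  also have "\<dots> = 2 * real_of_int (dist_sum A a) + (\<Sum>s\<in>A. \<Sum>t\<in>A. ?m s t)"
    unfolding dist_sum_def by (simp add: manhattan_commute)
  finally show ?thesis
    unfolding cost_def by simp
qed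

lemma optimal_town_exchange:
  assumes opt: "optimal_town n S" and p: "p \<in> S" and q: "q \<notin> S"
  shows "dist_sum S p + manhattan p q \<le> dist_sum S q"
proof -
  define R where "R = S - {p}"
  have fin: "finite R" using optimal_town_finite[OF opt] by (simp add: R_def)
  have S: "S = insert p R" and pR: "p \<notin> R" and qR: "q \<notin> R"
    using p q by (auto simp: R_def)
  have "is_town n (insert q R)"
    using opt fin pR qR unfolding optimal_town_def is_town_def S by simp
  hence "cost (insert p R) \<le> cost (insert q R)"
    using opt unfolding optimal_town_def S by blast
  hence "dist_sum R p \<le> dist_sum R q"
    by (simp add: cost_insert fin pR qR)
  moreover have "dist_sum S p = dist_sum R p" "dist_sum S q = dist_sum R q + manhattan p q"
    unfolding dist_sum_def S using fin pR by (simp_all add: manhattan_commute)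
  ultimately show ?thesis by simp
qed

lemma dist_sum_step_down:
  assumes "finite S"
  shows "dist_sum S (x, y - 1) - dist_sum S (x, y) = int (card S) - 2 * int (card {t\<in>S. snd t \<le> y - 1})"
proof -
  have "dist_sum S (x, y - 1) - dist_sum S (x, y) = (\<Sum>t\<in>S. manhattan (x, y - 1) t - manhattan (x, y) t)"
    unfolding dist_sum_def by (simp add: sum_subtractf)
  also have "\<dots> = (\<Sum>t\<in>S. 1 - 2 * (if snd t \<le> y - 1 then 1 else 0))"
    by (rule sum.cong) (auto simp: manhattan_def)
  also have "\<dots> = int (card S) - 2 * int (card {t\<in>S. snd t \<le> y - 1})"
    using assms by (simp add: sum_subtractf sum_distrib_left[symmetric] sum.inter_filter[symmetric])
  finally show ?thesis .
qed

lemma optimal_town_step_down: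
  assumes opt: "optimal_town n S" and half: "half_below S \<kappa>"
    and xy: "(x, y) \<in> S" and above: "\<kappa> < y"
  shows "(x, y - 1) \<in> S"
proof (rule ccontr)
  assume "(x, y - 1) \<notin> S"
  from optimal_town_exchange[OF opt xy this]
  have "1 \<le> dist_sum S (x, y - 1) - dist_sum S (x, y)"
    by (simp add: manhattan_def)
  moreover have "card {t\<in>S. snd t \<le> \<kappa>} \<le> card {t\<in>S. snd t \<le> y - 1}"
    using optimal_town_finite[OF opt] above by (intro card_mono) auto
  ultimately show False
    using half dist_sum_step_down[OF optimal_town_finite[OF opt], of x y]
    unfolding half_below_def by linarith
qed

lemma optimal_town_column_down_closed:
  assumes opt: "optimal_town n S" and half: "half_below S \<kappa>"
    and xy: "(x, y) \<in> S" and "\<kappa> \<le> z" "z \<le> y"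
  shows "(x, z) \<in> S"
proof -
  have "(x, z + int k) \<in> S \<Longrightarrow> (x, z) \<in> S" for k
  proof (induction k)
    case (Suc k)
    have "(x, z + int (Suc k) - 1) \<in> S"
      using optimal_town_step_down[OF opt half Suc.prems] \<open>\<kappa> \<le> z\<close> by simp
    with Suc.IH show ?case by simp
  qed simp
  from this[of "nat (y - z)"] show ?thesis using xy \<open>z \<le> y\<close> by simp
qed

lemma card_row_antimono_above:
  assumes opt: "optimal_town n S" and half: "half_below S \<kappa>" and "\<kappa> < a" "a \<le> b"
  shows "card (row S b) \<le> card (row S a)"
proof (rule card_inj_on_le)
  let ?f = "\<lambda>(x, y). (x, y - (b - a))"
  show "inj_on ?f (row S b)" by (auto simp: inj_on_def)
  show "?f ` row S b \<subseteq> row S a"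
    using optimal_town_column_down_closed[OF opt half] assms(3,4) by (auto simp: row_def)
  show "finite (row S a)" using optimal_town_finite[OF opt] by (simp add: row_def)
qed

lemma sum_index_weighted_antimono:
  fixes r :: "nat \<Rightarrow> nat"
  assumes antimono: "\<And>i j. 1 \<le> i \<Longrightarrow> i \<le> j \<Longrightarrow> r j \<le> r i"
  shows "2 * (\<Sum>i=1..T. i * r i) \<le> (T + 1) * (\<Sum>i=1..T. r i)"
proof (induction T)
  case (Suc T)
  have "(\<Sum>i=1..T. r (Suc T)) \<le> (\<Sum>i=1..T. r i)"
    by (rule sum_mono) (use antimono in auto)
  with Suc.IH show ?case by (simp add: algebra_simps)
qed simp

lemma sum_by_rows:
  fixes f :: "int \<Rightarrow> 'a::comm_semiring_1"
  assumes fin: "finite A" and rows: "\<And>t. t \<in> A \<Longrightarrow> \<kappa> < snd t \<and> snd t \<le> \<kappa> + int T"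
  shows "(\<Sum>t\<in>A. f (snd t)) = (\<Sum>i=1..T. of_nat (card (row A (\<kappa> + int i))) * f (\<kappa> + int i))"
proof -
  let ?g = "\<lambda>t. nat (snd t - \<kappa>)"
  have "?g ` A \<subseteq> {1..T}" using rows by force
  hence "(\<Sum>t\<in>A. f (snd t)) = (\<Sum>i=1..T. \<Sum>t\<in>{t\<in>A. ?g t = i}. f (snd t))"
    using fin by (simp add: sum.group)
  also have "\<dots> = (\<Sum>i=1..T. \<Sum>t\<in>row A (\<kappa> + int i). f (\<kappa> + int i))"
  proof (rule sum.cong[OF refl])
    fix i assume "i \<in> {1..T}"
    hence "{t\<in>A. ?g t = i} = row A (\<kappa> + int i)" using rows by (force simp: row_def)
    thus "(\<Sum>t\<in>{t\<in>A. ?g t = i}. f (snd t)) = (\<Sum>t\<in>row A (\<kappa> + int i). f (\<kappa> + int i))"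
      by (simp add: row_def)
  qed
  finally show ?thesis by simp
qed

lemma mass_above_half_below_bound:
  assumes opt: "optimal_town n S" and half: "half_below S \<kappa>"
    and top: "\<And>t. t \<in> S \<Longrightarrow> snd t \<le> \<kappa> + int T"
  shows "4 * (\<Sum>t\<in>{t\<in>S. \<kappa> < snd t}. snd t - \<kappa>) \<le> (int T + 1) * int (card S)"
proof -
  define A where "A = {t\<in>S. \<kappa> < snd t}"
  define r where "r i = card (row S (\<kappa> + int i))" for i
  have fin: "finite S" using optimal_town_finite[OF opt] .
  have finA: "finite A" and rowsA: "\<And>t. t \<in> A \<Longrightarrow> \<kappa> < snd t \<and> snd t \<le> \<kappa> + int T"
    using fin top by (auto simp: A_def)
  have r: "card (row A (\<kappa> + int i)) = r i" if "i \<in> {1..T}" for i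
  proof -
    have "row A (\<kappa> + int i) = row S (\<kappa> + int i)" using that by (auto simp: A_def row_def)
    thus ?thesis by (simp add: r_def)
  qed
  have mass: "(\<Sum>t\<in>A. snd t - \<kappa>) = int (\<Sum>i=1..T. i * r i)"
    using sum_by_rows[OF finA rowsA, of "\<lambda>y. y - \<kappa>"] by (simp add: r mult.commute)
  have cardA: "card A = (\<Sum>i=1..T. r i)"
    using sum_by_rows[OF finA rowsA, of "\<lambda>_. 1::nat"] by (simp add: r)
  have "2 * (\<Sum>i=1..T. i * r i) \<le> (T + 1) * card A"
    unfolding cardA r_def
    by (rule sum_index_weighted_antimono) (rule card_row_antimono_above[OF opt half]; simp)
  moreover have "card A + card {t\<in>S. snd t \<le> \<kappa>} = card S"
    using fin by (subst card_Un_disjoint[symmetric]) (auto simp: A_def intro: arg_cong[where f = card])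
  with half have "2 * card A \<le> card S" unfolding half_below_def by linarith
  hence "(T + 1) * (2 * card A) \<le> (T + 1) * card S" by (rule mult_left_mono) simp
  ultimately have "4 * (\<Sum>i=1..T. i * r i) \<le> (T + 1) * card S" by linarith
  hence "int (4 * (\<Sum>i=1..T. i * r i)) \<le> int ((T + 1) * card S)" by linarith
  thus ?thesis unfolding A_def[symmetric] mass by (simp add: algebra_simps)
qed

lemma exists_free_point_in_row:
  assumes fin: "finite S" and small: "card (row S y) \<le> w"
  obtains x' where "2 * \<bar>x' - x\<bar> \<le> int w + 1" "(x', y) \<notin> S"
proof -
  define m where "m = (int w + 1) div 2"
  have "\<exists>z\<in>{x - m..x + m}. (z, y) \<notin> S"
  proof (rule ccontr)
    assume "\<not> ?thesis"
    hence "(\<lambda>z. (z, y)) ` {x - m..x + m} \<subseteq> row S y" by (auto simp: row_def)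
    hence "card ((\<lambda>z. (z, y)) ` {x - m..x + m}) \<le> card (row S y)"
      using fin by (intro card_mono) (simp_all add: row_def)
    moreover have "card ((\<lambda>z. (z, y)) ` {x - m..x + m}) = nat (2 * m + 1)"
      by (subst card_image) (auto simp: inj_on_def)
    ultimately show False using small unfolding m_def by linarith
  qed
  then obtain x' where x': "x' \<in> {x - m..x + m}" "(x', y) \<notin> S" ..
  have "2 * m \<le> int w + 1" unfolding m_def by simp
  with x' show ?thesis by (intro that[of x']) (auto split: abs_split)
qed

lemma manhattan_gain_le:
  assumes "b \<le> \<kappa> + T"
  shows "manhattan (x', \<kappa>) (a, b) - manhattan (x, \<kappa> + T) (a, b)
    \<le> \<bar>x' - x\<bar> + 2 * (if \<kappa> < b then b - \<kappa> else 0) - T"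
proof -
  have "\<bar>x' - a\<bar> - \<bar>x - a\<bar> \<le> \<bar>x' - x\<bar>" by linarith
  moreover have "\<bar>\<kappa> - b\<bar> - \<bar>\<kappa> + T - b\<bar> = 2 * (if \<kappa> < b then b - \<kappa> else 0) - T"
    using assms by auto
  ultimately show ?thesis unfolding manhattan_def by simp
qed

lemma dist_sum_gain_bound:
  assumes fin: "finite S" and top: "\<And>t. t \<in> S \<Longrightarrow> snd t \<le> \<kappa> + T"
  shows "dist_sum S (x', \<kappa>) - dist_sum S (x, \<kappa> + T)
    \<le> int (card S) * \<bar>x' - x\<bar> + 2 * (\<Sum>t\<in>{t\<in>S. \<kappa> < snd t}. snd t - \<kappa>) - int (card S) * T"
proof -
  have "dist_sum S (x', \<kappa>) - dist_sum S (x, \<kappa> + T)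
      = (\<Sum>t\<in>S. manhattan (x', \<kappa>) t - manhattan (x, \<kappa> + T) t)"
    unfolding dist_sum_def by (simp add: sum_subtractf)
  also have "\<dots> \<le> (\<Sum>t\<in>S. \<bar>x' - x\<bar> + 2 * (if \<kappa> < snd t then snd t - \<kappa> else 0) - T)"
    using top by (intro sum_mono) (metis manhattan_gain_le prod.collapse)
  also have "\<dots> = (\<Sum>t\<in>S. \<bar>x' - x\<bar>) + 2 * (\<Sum>t\<in>S. if \<kappa> < snd t then snd t - \<kappa> else 0) - (\<Sum>t\<in>S. T)"
    by (simp add: sum.distrib sum_subtractf sum_distrib_left)
  also have "\<dots> = int (card S) * \<bar>x' - x\<bar> + 2 * (\<Sum>t\<in>{t\<in>S. \<kappa> < snd t}. snd t - \<kappa>) - int (card S) * T"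
    using fin by (simp add: sum.inter_filter)
  finally show ?thesis .
qed

lemma optimal_town_above_half_below_le_width:
  assumes opt: "optimal_town n S" and half: "half_below S \<kappa>"
    and rows: "\<And>i. card (row S i) \<le> w" and p: "p \<in> S"
  shows "snd p \<le> \<kappa> + int w + 1"
proof (rule ccontr)
  assume far: "\<not> snd p \<le> \<kappa> + int w + 1"
  have fin: "finite S" using optimal_town_finite[OF opt] .
  define y where "y = Max (snd ` S)"
  have "y \<in> snd ` S" using fin p unfolding y_def by (intro Max_in) auto
  then obtain x where top: "(x, y) \<in> S" by force
  have below_top: "snd t \<le> y" if "t \<in> S" for t using fin that unfolding y_def by simp
  define T where "T = y - \<kappa>"
  have T: "int w + 2 \<le> T" using below_top[OF p] far by (simp add: T_def)
  obtain x' where x': "2 * \<bar>x' - x\<bar> \<le> int w + 1" "(x', \<kappa>) \<notin> S"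
    using exists_free_point_in_row[OF fin rows] .
  define mass where "mass = (\<Sum>t\<in>{t\<in>S. \<kappa> < snd t}. snd t - \<kappa>)"
  have "\<bar>x' - x\<bar> + T \<le> dist_sum S (x', \<kappa>) - dist_sum S (x, \<kappa> + T)"
    using optimal_town_exchange[OF opt top x'(2)] T by (simp add: T_def manhattan_def)
  also have "\<dots> \<le> int n * \<bar>x' - x\<bar> + 2 * mass - int n * T"
    using dist_sum_gain_bound[OF fin, of \<kappa> T] below_top optimal_town_card[OF opt]
    by (simp add: T_def mass_def)
  finally have gain: "\<bar>x' - x\<bar> + T \<le> int n * \<bar>x' - x\<bar> + 2 * mass - int n * T" .
  have "4 * mass \<le> (T + 1) * int n"
    using mass_above_half_below_bound[OF opt half, of "nat T"] below_top T optimal_town_card[OF opt]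
    by (simp add: mass_def T_def)
  \<comment> \<open>so by \<open>gain\<close>, \<open>2\<bar>x' - x\<bar> + 2T \<le> n (2\<bar>x' - x\<bar> + 1 - T) \<le> 0\<close>\<close>
  moreover have "int n * (2 * \<bar>x' - x\<bar> + 1 - T) \<le> 0"
    using x'(1) T by (intro mult_nonneg_nonpos) auto
  moreover have "int n * (2 * \<bar>x' - x\<bar> + 1 - T) = 2 * (int n * \<bar>x' - x\<bar>) - 2 * (int n * T) + (T + 1) * int n"
    by (simp add: algebra_simps)
  ultimately show False using gain T by linarith
qed

lemma exists_median_row:
  assumes fin: "finite S" and ne: "S \<noteq> {}"
  obtains \<kappa> where "half_below S \<kappa>" "card S \<le> 2 * card {t\<in>S. \<kappa> \<le> snd t}"
proof -
  define b where "b = Min (snd ` S) - 1"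
  define k where "k = (LEAST k. half_below S (b + int k))"
  have min: "Min (snd ` S) \<le> snd t" and max: "snd t \<le> Max (snd ` S)" if "t \<in> S" for t
    using fin that by simp_all
  hence below_b: "{t\<in>S. snd t \<le> b} = {}" by (force simp: b_def)
  have "b \<le> Max (snd ` S)" using ne min max by (force simp: b_def)
  have "half_below S (b + int (nat (Max (snd ` S) - b)))"
  proof -
    have "{t\<in>S. snd t \<le> b + int (nat (Max (snd ` S) - b))} = S"
      using max \<open>b \<le> Max (snd ` S)\<close> by auto
    thus ?thesis by (simp add: half_below_def)
  qed
  hence half: "half_below S (b + int k)" unfolding k_def by (rule LeastI)
  have "\<not> half_below S b" using fin ne by (simp add: half_below_def below_b del: Collect_empty_eq)
  hence "0 < k" using half by (cases k) auto
  hence "\<not> half_below S (b + int k - 1)"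
    using not_less_Least[of "k - 1" "\<lambda>k. half_below S (b + int k)"] by (simp add: k_def of_nat_diff add_diff_eq)
  moreover have "card {t\<in>S. b + int k \<le> snd t} + card {t\<in>S. snd t \<le> b + int k - 1} = card S"
    using fin by (subst card_Un_disjoint[symmetric]) (auto intro: arg_cong[where f = card])
  ultimately have "card S \<le> 2 * card {t\<in>S. b + int k \<le> snd t}"
    unfolding half_below_def by linarith
  with half show ?thesis by (rule that)
qed

lemma optimal_town_image_involution:
  assumes inv: "\<And>p. f (f p) = p" and iso: "\<And>p q. manhattan (f p) (f q) = manhattan p q"
    and opt: "optimal_town n S"
  shows "optimal_town n (f ` S)"
proof -
  have inj: "inj_on f A" for A by (metis inj_on_def inv)
  have cost: "cost (f ` A) = cost A" for A
    unfolding cost_def by (simp add: sum.reindex[OF inj] iso)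
  have town: "is_town n (f ` A) \<longleftrightarrow> is_town n A" for A
    unfolding is_town_def using finite_image_iff[OF inj] card_image[OF inj] by simp
  show ?thesis
    using opt town cost unfolding optimal_town_def by metis
qed

lemma card_row_le_width:
  assumes "finite S" shows "card (row S i) \<le> width S"
proof -
  have "range (\<lambda>i. card (row S i)) \<subseteq> {0..card S}"
    using assms by (auto simp: row_def intro!: card_mono)
  hence "finite (range (\<lambda>i. card (row S i)))" by (rule finite_subset) simp
  thus ?thesis unfolding width_def by (intro Max_ge) auto
qed

lemma ex_card_col_eq_height:
  assumes "finite S" obtains a where "card (col S a) = height S"
proof -
  have "range (\<lambda>i. card (col S i)) \<subseteq> {0..card S}"
    using assms by (auto simp: col_def intro!: card_mono)
  hence "finite (range (\<lambda>i. card (col S i)))" by (rule finite_subset) simp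
  hence "height S \<in> range (\<lambda>i. card (col S i))" unfolding height_def by (intro Max_in) auto
  with that show ?thesis by (metis rangeE)
qed

lemma optimal_town_height_le_width:
  assumes opt: "optimal_town n S" and ne: "S \<noteq> {}"
  shows "height S \<le> 2 * width S + 3"
proof -
  let ?w = "width S"
  have fin: "finite S" using optimal_town_finite[OF opt] .
  obtain \<kappa> where half: "half_below S \<kappa>" and upper_half: "card S \<le> 2 * card {t\<in>S. \<kappa> \<le> snd t}"
    using exists_median_row[OF fin ne] .
  have above: "snd p \<le> \<kappa> + int ?w + 1" if "p \<in> S" for p
    using optimal_town_above_half_below_le_width[OF opt half card_row_le_width[OF fin] that] .
  define \<rho> :: "point \<Rightarrow> point" where "\<rho> p = (fst p, - snd p)" for p
  have inj: "inj_on \<rho> A" for A by (auto simp: inj_on_def \<rho>_def prod_eq_iff)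
  have opt': "optimal_town n (\<rho> ` S)"
    by (rule optimal_town_image_involution[OF _ _ opt]) (auto simp: \<rho>_def manhattan_def)
  have "{t\<in>\<rho> ` S. snd t \<le> - \<kappa>} = \<rho> ` {t\<in>S. \<kappa> \<le> snd t}" by (force simp: \<rho>_def)
  hence half': "half_below (\<rho> ` S) (- \<kappa>)"
    using upper_half by (simp add: half_below_def card_image[OF inj])
  have rows': "card (row (\<rho> ` S) i) \<le> ?w" for i
  proof -
    have "row (\<rho> ` S) i = \<rho> ` row S (- i)" by (force simp: row_def \<rho>_def)
    thus ?thesis using card_row_le_width[OF fin] by (simp add: card_image[OF inj])
  qed
  have below: "\<kappa> - int ?w - 1 \<le> snd p" if "p \<in> S" for p
    using optimal_town_above_half_below_le_width[OF opt' half' rows', of "\<rho> p"] that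
    by (simp add: \<rho>_def)
  obtain a where a: "card (col S a) = height S" using ex_card_col_eq_height[OF fin] .
  have "height S = card (snd ` col S a)"
    unfolding a[symmetric] by (rule card_image[symmetric]) (auto simp: inj_on_def col_def prod_eq_iff)
  also have "\<dots> \<le> card {\<kappa> - int ?w - 1..\<kappa> + int ?w + 1}"
    using above below by (intro card_mono) (auto simp: col_def)
  finally show ?thesis by simp
qed

lemma width_swap: "width (prod.swap ` S) = height S"
proof -
  have "row (prod.swap ` S) i = prod.swap ` col S i" for i unfolding col_def row_def by force
  thus ?thesis unfolding height_def width_def by (simp add: card_image)
qed

lemma height_swap: "height (prod.swap ` S) = width S"
proof -
  have "col (prod.swap ` S) i = prod.swap ` row S i" for i unfolding col_def row_def by force
  thus ?thesis unfolding height_def width_def by (simp add: card_image)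
qed

theorem lemma4:
  fixes n :: nat and S :: "point set"
  assumes "n \<ge> 1" and "optimal_town n S"
  shows "real (width S) > real (height S) / 2 - 3 \<and> real (height S) > real (width S) / 2 - 3"
proof -
  have ne: "S \<noteq> {}" using assms optimal_town_card by force
  have "height S \<le> 2 * width S + 3"
    using optimal_town_height_le_width[OF assms(2) ne] .
  moreover have "optimal_town n (prod.swap ` S)"
    by (rule optimal_town_image_involution[OF _ _ assms(2)]) (auto simp: manhattan_def)
  hence "width S \<le> 2 * height S + 3"
    using optimal_town_height_le_width[of n "prod.swap ` S"] ne by (simp add: height_swap width_swap)
  ultimately show ?thesis by linarith
qed

end
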